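(* Let $\theta_1$ be an irrational number, $\theta_0,\theta_2,\ldots,\theta_n$ real numbers, and $m\ge2$ an integer. Then the array $\big(\lfloor v_1\theta_1+v_2\theta_2+\cdots+v_n\theta_n+\theta_0\rfloor\big)_{\mathbf{v}\in\mathbb{N}^n}$ is uniformly distributed mod $m$.
   Context: An array $(S(\mathbf{v}))_{\mathbf{v}\in\mathbb{N}^n}$ of integers is uniformly distributed mod $m$ if for each $j\in\{0,\ldots,m-1\}$, $\#\{\mathbf{v}:1\le v_i\le V_i\ \forall i,\ S(\mathbf{v})\equiv j\pmod m\}/(V_1\cdots V_n)\to 1/m$ as $V_1,\ldots,V_n\to\infty$. *)

theory Defs
  imports "HOL-Analysis.Analysis"
begin

text \<open>Vectors v in N^n are represented as functions nat => nat, with the coordinates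
  v 1, ..., v n being the relevant ones; outside {1..n} they are fixed to 0.\<close>

definition box :: "nat \<Rightarrow> (nat \<Rightarrow> nat) \<Rightarrow> (nat \<Rightarrow> nat) set" where
  "box n V = {v. (\<forall>i\<in>{1..n}. 1 \<le> v i \<and> v i \<le> V i) \<and> (\<forall>i. i \<notin> {1..n} \<longrightarrow> v i = 0)}"

definition all_to_infinity :: "nat \<Rightarrow> (nat \<Rightarrow> nat) filter" where
  "all_to_infinity n = (INF N. principal {V. \<forall>i\<in>{1..n}. N \<le> V i})"

definition unif_distr_mod :: "nat \<Rightarrow> ((nat \<Rightarrow> nat) \<Rightarrow> int) \<Rightarrow> int \<Rightarrow> bool" where
  "unif_distr_mod n S m \<longleftrightarrow>
     (\<forall>j\<in>{0..<m}.
        ((\<lambda>V. real (card {v \<in> box n V. S v mod m = j}) / (\<Prod>i=1..n. real (V i)))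
          \<longlongrightarrow> 1 / real_of_int m) (all_to_infinity n))"

end

theory Submission
  imports Defs
begin

text \<open>Fibring the box over the first coordinate reduces the theorem to the one-dimensional
  estimate: the number of \<open>a \<le> N\<close> with \<open>\<lfloor>a \<theta> + d\<rfloor> \<equiv> j (mod m)\<close> is \<open>N/m + o(N)\<close>,
  uniformly in the shift \<open>d\<close>. The indicator of \<open>\<lfloor>x\<rfloor> \<equiv> j (mod m)\<close> is
  \<open>\<lfloor>(x - j)/m\<rfloor> - \<lfloor>(x - j - 1)/m\<rfloor>\<close>. By Kronecker's theorem there is \<open>q\<close> with
  \<open>q \<theta> / m = p + \<delta>\<close>, \<open>p\<close> an integer and \<open>0 < \<delta>\<close> small. Along each residue class
  \<open>a \<equiv> r (mod q)\<close> the arguments of both floors then advance by \<open>\<delta>\<close> modulo integers, and comparing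
  the shift \<open>1/m\<close> with integer multiples of \<open>\<delta>\<close> telescopes the indicator sum over \<open>L\<close> terms
  to \<open>L/m + O(L \<delta> + 1/\<delta>)\<close>.\<close>

lemma sum_shift_telescope:
  fixes f :: "int \<Rightarrow> real"
  shows "(\<Sum>k<L. f (int k) - f (int k - int t)) = (\<Sum>i<t. f (int L - int i - 1) - f (- int i - 1))"
proof -
  have "f (int k) - f (int k - int t) = (\<Sum>i<t. f (int k - int i) - f (int k - int i - 1))" for k
    using sum_lessThan_telescope[of "\<lambda>i. - f (int k - int i)" t] by (simp add: algebra_simps)
  then have "(\<Sum>k<L. f (int k) - f (int k - int t)) = (\<Sum>k<L. \<Sum>i<t. f (int k - int i) - f (int k - int i - 1))"
    by simp
  also have "\<dots> = (\<Sum>i<t. \<Sum>k<L. f (int k - int i) - f (int k - int i - 1))"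
    by (rule sum.swap)
  also have "\<dots> = (\<Sum>i<t. f (int L - int i - 1) - f (- int i - 1))"
  proof -
    have "(\<Sum>k<L. f (int k - int i) - f (int k - int i - 1)) = f (int L - int i - 1) - f (- int i - 1)" for i
      using sum_lessThan_telescope[of "\<lambda>k. f (int k - int i - 1)" L] by (simp add: algebra_simps)
    then show ?thesis by simp
  qed
  finally show ?thesis .
qed

lemma sum_floor_progression_shift:
  fixes z \<delta> :: real and L t :: nat
  defines "D \<equiv> (\<Sum>k<L. real_of_int (\<lfloor>z + real k * \<delta>\<rfloor> - \<lfloor>z + (real k - real t) * \<delta>\<rfloor>))"
  shows "real t * (real L * \<delta> - 1) \<le> D" "D \<le> real t * (real L * \<delta> + 1)"
proof -
  define F where "F = (\<lambda>x::int. real_of_int \<lfloor>z + real_of_int x * \<delta>\<rfloor>)"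
  have "D = (\<Sum>k<L. F (int k) - F (int k - int t))"
    by (simp add: D_def F_def)
  also have "\<dots> = (\<Sum>i<t. F (int L - int i - 1) - F (- int i - 1))"
    by (rule sum_shift_telescope)
  finally have D: "D = \<dots>" .
  have bounds: "real L * \<delta> - 1 \<le> F (int L - int i - 1) - F (- int i - 1)"
    "F (int L - int i - 1) - F (- int i - 1) \<le> real L * \<delta> + 1" for i
  proof -
    define y where "y = z + real_of_int (- int i - 1) * \<delta>"
    have "F (int L - int i - 1) - F (- int i - 1) = real_of_int (\<lfloor>y + real L * \<delta>\<rfloor> - \<lfloor>y\<rfloor>)"
      unfolding F_def y_def by (simp add: algebra_simps)
    then show "real L * \<delta> - 1 \<le> F (int L - int i - 1) - F (- int i - 1)"
      "F (int L - int i - 1) - F (- int i - 1) \<le> real L * \<delta> + 1"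
      by linarith+
  qed
  have "(\<Sum>i<t. real L * \<delta> - 1) \<le> D" "D \<le> (\<Sum>i<t. real L * \<delta> + 1)"
    unfolding D by (intro sum_mono bounds)+
  then show "real t * (real L * \<delta> - 1) \<le> D" "D \<le> real t * (real L * \<delta> + 1)"
    by simp_all
qed

lemma sum_floor_diff_progression:
  fixes z c \<delta> :: real and L :: nat
  assumes "\<delta> > 0" "c \<ge> 0"
  shows "\<bar>(\<Sum>k<L. real_of_int (\<lfloor>z + real k * \<delta>\<rfloor> - \<lfloor>z - c + real k * \<delta>\<rfloor>)) - real L * c\<bar>
           \<le> real L * \<delta> + c / \<delta> + 1"
proof -
  define D where "D = (\<lambda>t::nat. \<Sum>k<L. real_of_int (\<lfloor>z + real k * \<delta>\<rfloor> - \<lfloor>z + (real k - real t) * \<delta>\<rfloor>))"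
  define s where "s = nat \<lfloor>c / \<delta>\<rfloor>"
  have s: "real s \<le> c / \<delta>" "c / \<delta> < real s + 1"
    using assms unfolding s_def by auto
  then have s\<delta>: "real s * \<delta> \<le> c" "c \<le> (real s + 1) * \<delta>"
    using assms by (simp_all add: field_simps)
  define X where "X = (\<Sum>k<L. real_of_int (\<lfloor>z + real k * \<delta>\<rfloor> - \<lfloor>z - c + real k * \<delta>\<rfloor>))"
  have D: "real t * (real L * \<delta> - 1) \<le> D t" "D t \<le> real t * (real L * \<delta> + 1)" for t
    unfolding D_def by (rule sum_floor_progression_shift)+
  have "\<lfloor>z - c + real k * \<delta>\<rfloor> \<le> \<lfloor>z + (real k - real s) * \<delta>\<rfloor>" for k
    using s\<delta> by (intro floor_mono) (simp add: algebra_simps)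
  then have "D s \<le> X"
    unfolding D_def X_def by (intro sum_mono) simp
  moreover have "real L * (c - \<delta>) \<le> real L * (real s * \<delta>)"
    using s\<delta> by (intro mult_left_mono) (simp_all add: algebra_simps)
  moreover have "real s * (real L * \<delta> - 1) = real L * (real s * \<delta>) - real s"
    by (simp add: algebra_simps)
  ultimately have lower: "real L * c - (real L * \<delta> + c / \<delta> + 1) \<le> X"
    using D(1)[of s] s(1) by (simp add: algebra_simps)
  have "\<lfloor>z + (real k - real (Suc s)) * \<delta>\<rfloor> \<le> \<lfloor>z - c + real k * \<delta>\<rfloor>" for k
    using s\<delta> by (intro floor_mono) (simp add: algebra_simps)
  then have "X \<le> D (Suc s)"
    unfolding D_def X_def by (intro sum_mono) simp
  moreover have "real L * ((real s + 1) * \<delta>) \<le> real L * (c + \<delta>)"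
    using s\<delta> by (intro mult_left_mono) (simp_all add: algebra_simps)
  moreover have "real (Suc s) * (real L * \<delta> + 1) = real L * ((real s + 1) * \<delta>) + real s + 1"
    by (simp add: algebra_simps)
  ultimately have upper: "X \<le> real L * c + (real L * \<delta> + c / \<delta> + 1)"
    using D(2)[of "Suc s"] s(1) by (simp add: algebra_simps)
  show ?thesis
    using lower upper unfolding X_def by (simp add: abs_le_iff)
qed

lemma div_minus_div_pred:
  fixes y m :: int
  assumes "m > 0"
  shows "y div m - (y - 1) div m = (if m dvd y then 1 else 0)"
proof -
  have "y - 1 = (y mod m - 1) + y div m * m"
    by simp
  then have "(y - 1) div m = y div m + (y mod m - 1) div m"
    using assms by (metis div_mult_self1 less_irrefl)
  moreover have "(y mod m - 1) div m = (if y mod m = 0 then -1 else 0)"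
  proof (cases "y mod m = 0")
    case False
    then have "0 \<le> y mod m - 1" "y mod m - 1 < m"
      using assms pos_mod_sign[of m y] pos_mod_bound[of m y] by linarith+
    then show ?thesis using False by simp
  qed (use assms in \<open>simp add: div_eq_minus1\<close>)
  ultimately show ?thesis
    by (simp add: dvd_eq_mod_eq_0)
qed

lemma floor_mod_eq_indicator:
  fixes x :: real and m j :: int
  assumes "0 \<le> j" "j < m"
  shows "real_of_int (\<lfloor>(x - of_int j) / of_int m\<rfloor> - \<lfloor>(x - of_int j - 1) / of_int m\<rfloor>)
           = of_bool (\<lfloor>x\<rfloor> mod m = j)"
proof -
  have "\<lfloor>(x - of_int i) / of_int m\<rfloor> = (\<lfloor>x\<rfloor> - i) div m" for i
    using floor_divide_real_eq_div[of m "x - of_int i"] assms by simp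
  from this[of j] this[of "j + 1"] have
    "\<lfloor>(x - of_int j) / of_int m\<rfloor> - \<lfloor>(x - of_int j - 1) / of_int m\<rfloor> = (if m dvd \<lfloor>x\<rfloor> - j then 1 else 0)"
    using div_minus_div_pred[of m "\<lfloor>x\<rfloor> - j"] assms by (simp add: algebra_simps)
  moreover have "m dvd \<lfloor>x\<rfloor> - j \<longleftrightarrow> \<lfloor>x\<rfloor> mod m = j"
    using assms mod_eq_dvd_iff[of "\<lfloor>x\<rfloor>" m j] by simp
  ultimately show ?thesis
    by simp
qed

lemma sum_lessThan_by_residue_classes:
  fixes f :: "nat \<Rightarrow> real" and c B :: real and q N :: nat
  assumes "q > 0" and f: "\<And>v. 0 \<le> f v" "\<And>v. f v \<le> 1" and c: "0 \<le> c" "c \<le> 1"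
    and classes: "\<And>r. r < q \<Longrightarrow> \<bar>(\<Sum>k<N div q. f (k * q + r)) - real (N div q) * c\<bar> \<le> B"
  shows "\<bar>(\<Sum>v<N. f v) - real N * c\<bar> \<le> real q * B + real q"
proof -
  define L where "L = N div q"
  have N: "N = L * q + (N - L * q)" "N - L * q \<le> q"
    unfolding L_def using assms(1) minus_div_mult_eq_mod[of N q] by simp_all
  have "(\<Sum>v<L * q. f v) = (\<Sum>k<L. \<Sum>r<q. f (k * q + r))"
    by (simp add: sum.nat_group[symmetric] sum.atLeastLessThan_shift_0[of _ "_ * q"] atLeast0LessThan)
  also have "\<dots> = (\<Sum>r<q. \<Sum>k<L. f (k * q + r))"
    by (rule sum.swap)
  finally have "\<bar>(\<Sum>v<L * q. f v) - real (L * q) * c\<bar> = \<bar>\<Sum>r<q. (\<Sum>k<L. f (k * q + r)) - real L * c\<bar>"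
    by (simp add: sum_subtractf algebra_simps)
  also have "\<dots> \<le> (\<Sum>r<q. \<bar>(\<Sum>k<L. f (k * q + r)) - real L * c\<bar>)"
    by (rule sum_abs)
  also have "\<dots> \<le> real q * B"
    using sum_bounded_above[of "{..<q}" "\<lambda>r. \<bar>(\<Sum>k<L. f (k * q + r)) - real L * c\<bar>" B] classes
    unfolding L_def by simp
  finally have main: "\<bar>(\<Sum>v<L * q. f v) - real (L * q) * c\<bar> \<le> real q * B" .
  have "0 \<le> (\<Sum>v\<in>{L * q..<N}. f v)" "(\<Sum>v\<in>{L * q..<N}. f v) \<le> real (N - L * q)"
    using sum_nonneg[of "{L * q..<N}" f] sum_bounded_above[of "{L * q..<N}" f 1] f by auto
  moreover have "0 \<le> real (N - L * q) * c" "real (N - L * q) * c \<le> real (N - L * q)"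
    using c by (simp_all add: mult_left_le)
  moreover have "(\<Sum>v<N. f v) = (\<Sum>v<L * q. f v) + (\<Sum>v\<in>{L * q..<N}. f v)"
    using N(1) by (metis sum.atLeastLessThan_concat le_add1 lessThan_atLeast0 zero_le)
  moreover have "real N * c = real (L * q) * c + real (N - L * q) * c"
    using N(1) by (metis distrib_right of_nat_add)
  ultimately show ?thesis
    using main N(2) by (simp add: abs_le_iff)
qed

lemma sum_floor_mod_indicator_progression:
  fixes x \<delta> :: real and m j p :: int and L :: nat
  assumes j: "0 \<le> j" "j < m" and \<delta>: "\<delta> > 0"
  shows "\<bar>(\<Sum>k<L. of_bool (\<lfloor>x + real k * (of_int m * (of_int p + \<delta>))\<rfloor> mod m = j)) - real L * (1 / of_int m)\<bar>
           \<le> real L * \<delta> + 1 / \<delta> + 1"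
proof -
  have m: "of_int m \<ge> (1::real)"
    using j by simp
  define z where "z = (x - of_int j) / of_int m"
  have "(x + real k * (of_int m * (of_int p + \<delta>)) - of_int j) / of_int m = (z + real k * \<delta>) + of_int (int k * p)"
    "(x + real k * (of_int m * (of_int p + \<delta>)) - of_int j - 1) / of_int m
       = (z - 1 / of_int m + real k * \<delta>) + of_int (int k * p)" for k
    unfolding z_def using m by (simp_all add: field_simps)
  then have "of_bool (\<lfloor>x + real k * (of_int m * (of_int p + \<delta>))\<rfloor> mod m = j)
               = real_of_int (\<lfloor>z + real k * \<delta>\<rfloor> - \<lfloor>z - 1 / of_int m + real k * \<delta>\<rfloor>)" for k
    unfolding floor_mod_eq_indicator[OF j, symmetric] by simp
  then have "\<bar>(\<Sum>k<L. of_bool (\<lfloor>x + real k * (of_int m * (of_int p + \<delta>))\<rfloor> mod m = j)) - real L * (1 / of_int m)\<bar>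
               \<le> real L * \<delta> + (1 / of_int m) / \<delta> + 1"
    using sum_floor_diff_progression[OF \<delta>, of "1 / of_int m" z L] m by simp
  also have "(1 / of_int m) / \<delta> \<le> 1 / \<delta>"
    using m \<delta> by (intro divide_right_mono) simp_all
  finally show ?thesis
    by simp
qed

lemma card_floor_mod_progression:
  fixes \<theta> d \<delta> :: real and m j p :: int and q N :: nat
  assumes j: "0 \<le> j" "j < m" and q: "q > 0" and \<delta>: "\<delta> > 0"
    and period: "real q * \<theta> = of_int m * (of_int p + \<delta>)"
  shows "\<bar>real (card {a\<in>{1..N}. \<lfloor>real a * \<theta> + d\<rfloor> mod m = j}) - real N / of_int m\<bar>
           \<le> real N * \<delta> + real q * (1 / \<delta> + 2)"
proof -
  define I where "I = (\<lambda>v::nat. of_bool (\<lfloor>real (Suc v) * \<theta> + d\<rfloor> mod m = j) :: real)"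
  have "real (card {a\<in>{Suc 0..N}. \<lfloor>real a * \<theta> + d\<rfloor> mod m = j})
          = (\<Sum>a\<in>{Suc 0..N}. of_bool (\<lfloor>real a * \<theta> + d\<rfloor> mod m = j))"
    by (simp add: sum.inter_filter[symmetric] Int_def)
  also have "\<dots> = (\<Sum>v<N. I v)"
    unfolding I_def by (rule sum.atLeast1_atMost_eq)
  finally have count: "real (card {a\<in>{1..N}. \<lfloor>real a * \<theta> + d\<rfloor> mod m = j}) = (\<Sum>v<N. I v)"
    by (simp only: One_nat_def)
  have "\<bar>(\<Sum>v<N. I v) - real N * (1 / of_int m)\<bar> \<le> real q * (real (N div q) * \<delta> + 1 / \<delta> + 1) + real q"
  proof (rule sum_lessThan_by_residue_classes[OF q])
    fix r
    have "real (Suc (k * q + r)) * \<theta> = real (Suc r) * \<theta> + real k * (real q * \<theta>)" for k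
      by (simp add: algebra_simps)
    then show "\<bar>(\<Sum>k<N div q. I (k * q + r)) - real (N div q) * (1 / of_int m)\<bar>
                 \<le> real (N div q) * \<delta> + 1 / \<delta> + 1"
      unfolding I_def period using sum_floor_mod_indicator_progression[OF j \<delta>, of "real (Suc r) * \<theta> + d"]
      by (simp add: add.assoc add.commute[of d])
  qed (use j in \<open>simp_all add: I_def\<close>)
  also have "\<dots> = real q * real (N div q) * \<delta> + real q * (1 / \<delta> + 2)"
    by (simp add: algebra_simps)
  also have "\<dots> \<le> real N * \<delta> + real q * (1 / \<delta> + 2)"
    using times_div_less_eq_dividend[of q N] \<delta> by (simp flip: of_nat_mult)
  finally show ?thesis
    unfolding count by simp
qed

lemma irrational_frac_mult_small:
  fixes \<beta> \<eta> :: real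
  assumes "\<beta> \<notin> \<rat>" "\<eta> > 0"
  obtains q :: nat where "q > 0" "0 < frac (real q * \<beta>)" "frac (real q * \<beta>) < \<eta>"
proof -
  define \<alpha> where "\<alpha> = min \<eta> 1 / 2"
  have "0 \<le> \<alpha>" "\<alpha> \<le> 1" "\<alpha> > 0"
    using assms(2) unfolding \<alpha>_def by auto
  then obtain q where "q > 0" "\<bar>frac (real q * \<beta>) - \<alpha>\<bar> < \<alpha>"
    using Kronecker_approx_1_explicit[OF assms(1)] by blast
  moreover have "2 * \<alpha> \<le> \<eta>"
    unfolding \<alpha>_def by simp
  ultimately show ?thesis
    using that by (simp add: abs_less_iff)
qed

lemma card_floor_mod_uniform:
  fixes \<theta> \<epsilon> :: real and m j :: int
  assumes irrational: "\<theta> \<notin> \<rat>" and j: "0 \<le> j" "j < m" and \<epsilon>: "\<epsilon> > 0"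
  obtains N0 where "\<And>N d. N \<ge> N0 \<Longrightarrow>
    \<bar>real (card {a\<in>{1..N}. \<lfloor>real a * \<theta> + d\<rfloor> mod m = j}) - real N / of_int m\<bar> \<le> \<epsilon> * real N"
proof -
  have m: "real_of_int m > 0"
    using j by simp
  have "\<theta> / of_int m \<notin> \<rat>"
  proof
    assume "\<theta> / of_int m \<in> \<rat>"
    then have "\<theta> / of_int m * of_int m \<in> \<rat>"
      by (intro Rats_mult) simp_all
    with irrational m show False
      by simp
  qed
  then obtain q where q: "q > 0" and "0 < frac (real q * (\<theta> / of_int m))" "frac (real q * (\<theta> / of_int m)) < \<epsilon> / 2"
    using \<epsilon> irrational_frac_mult_small[of "\<theta> / of_int m" "\<epsilon> / 2"] by auto
  moreover define \<delta> where "\<delta> = frac (real q * (\<theta> / of_int m))"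
  ultimately have \<delta>: "0 < \<delta>" "\<delta> < \<epsilon> / 2"
    by simp_all
  have period: "real q * \<theta> = of_int m * (of_int \<lfloor>real q * (\<theta> / of_int m)\<rfloor> + \<delta>)"
    unfolding \<delta>_def frac_def using m by simp
  define N0 where "N0 = nat \<lceil>2 * real q * (1 / \<delta> + 2) / \<epsilon>\<rceil>"
  show ?thesis
  proof (rule that)
    fix N :: nat and d :: real
    assume "N \<ge> N0"
    then have "2 * real q * (1 / \<delta> + 2) / \<epsilon> \<le> real N"
      unfolding N0_def by linarith
    then have "real q * (1 / \<delta> + 2) \<le> real N * (\<epsilon> / 2)"
      using \<epsilon> by (simp add: field_simps)
    moreover have "real N * \<delta> \<le> real N * (\<epsilon> / 2)"
      using \<delta> by (intro mult_left_mono) auto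
    moreover have "\<epsilon> * real N = real N * (\<epsilon> / 2) + real N * (\<epsilon> / 2)"
      by (simp add: algebra_simps)
    ultimately show "\<bar>real (card {a\<in>{1..N}. \<lfloor>real a * \<theta> + d\<rfloor> mod m = j}) - real N / of_int m\<bar> \<le> \<epsilon> * real N"
      using card_floor_mod_progression[OF j q \<delta>(1) period, of N d] by linarith
  qed
qed

lemma box_eq_image_PiE:
  "box n V = (\<lambda>f i. if i \<in> {1..n} then f i else 0) ` PiE {1..n} (\<lambda>i. {1..V i})"
proof
  show "box n V \<subseteq> (\<lambda>f i. if i \<in> {1..n} then f i else 0) ` PiE {1..n} (\<lambda>i. {1..V i})"
  proof
    fix v assume v: "v \<in> box n V"
    then have "v = (\<lambda>i. if i \<in> {1..n} then restrict v {1..n} i else 0)"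
      unfolding box_def by (auto simp: fun_eq_iff)
    moreover have "restrict v {1..n} \<in> PiE {1..n} (\<lambda>i. {1..V i})"
      using v unfolding box_def by auto
    ultimately show "v \<in> (\<lambda>f i. if i \<in> {1..n} then f i else 0) ` PiE {1..n} (\<lambda>i. {1..V i})"
      by blast
  qed
qed (auto simp: box_def PiE_iff)

lemma finite_box: "finite (box n V)"
  unfolding box_eq_image_PiE by (intro finite_imageI finite_PiE) auto

lemma card_box: "card (box n V) = (\<Prod>i=1..n. V i)"
proof -
  have "inj_on (\<lambda>f i. if i \<in> {1..n} then f i else 0) (PiE {1..n} (\<lambda>i. {1..V i}))"
  proof (rule inj_onI)
    fix f g assume f: "f \<in> PiE {1..n} (\<lambda>i. {1..V i})" and g: "g \<in> PiE {1..n} (\<lambda>i. {1..V i})"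
      and eq: "(\<lambda>i. if i \<in> {1..n} then f i else 0) = (\<lambda>i. if i \<in> {1..n} then g i else 0)"
    show "f = g"
    proof (rule PiE_ext[OF f g])
      fix i assume "i \<in> {1..n}"
      then show "f i = g i"
        using fun_cong[OF eq, of i] by simp
    qed
  qed
  then show ?thesis
    unfolding box_eq_image_PiE by (simp add: card_image card_PiE)
qed

lemma card_box_filter_eq_sum_fibres:
  assumes "n \<ge> 1"
  shows "card {v\<in>box n V. Q v} = (\<Sum>u\<in>(\<lambda>v. v(1:=0)) ` box n V. card {a\<in>{1..V 1}. Q (u(1:=a))})"
proof -
  define B where "B = (\<lambda>v::nat\<Rightarrow>nat. v(1:=0)) ` box n V"
  have one: "(1::nat) \<in> {1..n}"
    using assms by simp
  have "{v\<in>box n V. Q v} = (\<lambda>(u, a). u(1:=a)) ` (SIGMA u:B. {a\<in>{1..V 1}. Q (u(1:=a))})"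
  proof (intro equalityI subsetI)
    fix v assume v: "v \<in> {v\<in>box n V. Q v}"
    then have "v 1 \<in> {1..V 1}"
      using one unfolding box_def by auto
    with v show "v \<in> (\<lambda>(u, a). u(1:=a)) ` (SIGMA u:B. {a\<in>{1..V 1}. Q (u(1:=a))})"
      unfolding B_def by (intro image_eqI[of _ _ "(v(1:=0), v 1)"]) auto
  next
    fix v assume "v \<in> (\<lambda>(u, a). u(1:=a)) ` (SIGMA u:B. {a\<in>{1..V 1}. Q (u(1:=a))})"
    then obtain w a where "w \<in> box n V" "a \<in> {1..V 1}" "Q (w(1:=a))" "v = w(1:=a)"
      unfolding B_def by auto
    then show "v \<in> {v\<in>box n V. Q v}"
      using one unfolding box_def by auto
  qed
  moreover have "inj_on (\<lambda>(u, a). u(1:=a)) (SIGMA u:B. {a\<in>{1..V 1}. Q (u(1:=a))})"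
    unfolding B_def by (rule inj_onI) (auto simp: fun_eq_iff split: if_splits)
  moreover have "finite B"
    unfolding B_def using finite_box by blast
  ultimately show ?thesis
    unfolding B_def[symmetric] by (simp add: card_image)
qed

lemma card_box_filter_approx:
  fixes c \<epsilon> :: real
  assumes "n \<ge> 1"
    and fibres: "\<And>u. \<bar>real (card {a\<in>{1..V 1}. Q (u(1:=a))}) - real (V 1) * c\<bar> \<le> \<epsilon> * real (V 1)"
  shows "\<bar>real (card {v\<in>box n V. Q v}) - (\<Prod>i=1..n. real (V i)) * c\<bar> \<le> \<epsilon> * (\<Prod>i=1..n. real (V i))"
proof -
  define B where "B = (\<lambda>v::nat\<Rightarrow>nat. v(1:=0)) ` box n V"
  have "(\<Prod>i=1..n. real (V i)) = real (card {v\<in>box n V. True})"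
    by (simp add: card_box flip: of_nat_prod)
  also have "\<dots> = (\<Sum>u\<in>B. real (card {a\<in>{1..V 1}. True}))"
    by (simp only: card_box_filter_eq_sum_fibres[OF assms(1)] B_def of_nat_sum fun_upd_apply)
  also have "\<dots> = (\<Sum>u\<in>B. real (V 1))"
    by (simp only: simp_thms Collect_mem_eq card_atLeastAtMost) simp
  finally have total: "(\<Prod>i=1..n. real (V i)) = (\<Sum>u\<in>B. real (V 1))" .
  have "\<bar>real (card {v\<in>box n V. Q v}) - (\<Sum>u\<in>B. real (V 1)) * c\<bar>
          = \<bar>\<Sum>u\<in>B. real (card {a\<in>{1..V 1}. Q (u(1:=a))}) - real (V 1) * c\<bar>"
    unfolding card_box_filter_eq_sum_fibres[OF assms(1)] B_def
    by (simp add: sum_subtractf sum_distrib_right)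
  also have "\<dots> \<le> (\<Sum>u\<in>B. \<bar>real (card {a\<in>{1..V 1}. Q (u(1:=a))}) - real (V 1) * c\<bar>)"
    by (rule sum_abs)
  also have "\<dots> \<le> (\<Sum>u\<in>B. \<epsilon> * real (V 1))"
    by (rule sum_mono[OF fibres])
  finally show ?thesis
    unfolding total sum_distrib_left .
qed

lemma unif_distr_mod_if_uniform_along_first_coordinate:
  fixes S :: "(nat \<Rightarrow> nat) \<Rightarrow> int" and m :: int
  assumes "n \<ge> 1"
    and uniform: "\<And>j \<epsilon>. j \<in> {0..<m} \<Longrightarrow> \<epsilon> > 0 \<Longrightarrow> \<exists>N0. \<forall>N\<ge>N0. \<forall>u.
          \<bar>real (card {a\<in>{1..N}. S (u(1:=a)) mod m = j}) - real N / of_int m\<bar> \<le> \<epsilon> * real N"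
  shows "unif_distr_mod n S m"
  unfolding unif_distr_mod_def tendsto_iff
proof (intro ballI allI impI)
  fix j and e :: real
  assume j: "j \<in> {0..<m}" and e: "e > 0"
  obtain N0 where N0: "\<And>N u. N \<ge> N0 \<Longrightarrow>
      \<bar>real (card {a\<in>{1..N}. S (u(1:=a)) mod m = j}) - real N * (1 / of_int m)\<bar> \<le> e / 2 * real N"
    using uniform[OF j, of "e / 2"] e by auto
  have "eventually (\<lambda>V. \<forall>i\<in>{1..n}. max N0 1 \<le> V i) (all_to_infinity n)"
    unfolding all_to_infinity_def by (rule eventually_INF1[of "max N0 1"]) (auto simp: eventually_principal)
  then show "eventually (\<lambda>V. dist (real (card {v \<in> box n V. S v mod m = j}) / (\<Prod>i=1..n. real (V i)))
                         (1 / real_of_int m) < e) (all_to_infinity n)"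
  proof (rule eventually_mono)
    fix V :: "nat \<Rightarrow> nat" assume V: "\<forall>i\<in>{1..n}. max N0 1 \<le> V i"
    define P where "P = (\<Prod>i=1..n. real (V i))"
    have "P > 0"
      unfolding P_def using V by (intro prod_pos) (auto simp: Suc_le_eq)
    have "V 1 \<ge> N0"
      using V assms(1) by auto
    then have bound: "\<bar>real (card {v \<in> box n V. S v mod m = j}) - P * (1 / of_int m)\<bar> \<le> e / 2 * P"
      unfolding P_def by (intro card_box_filter_approx[OF assms(1)] N0)
    have "real (card {v \<in> box n V. S v mod m = j}) / P - 1 / of_int m
            = (real (card {v \<in> box n V. S v mod m = j}) - P * (1 / of_int m)) / P"
      using \<open>P > 0\<close> by (simp add: diff_divide_distrib)
    then have "dist (real (card {v \<in> box n V. S v mod m = j}) / P) (1 / of_int m)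
                 = \<bar>real (card {v \<in> box n V. S v mod m = j}) - P * (1 / of_int m)\<bar> / P"
      using \<open>P > 0\<close> by (simp add: dist_real_def)
    also have "\<dots> \<le> e / 2 * P / P"
      using \<open>P > 0\<close> by (intro divide_right_mono[OF bound]) simp
    also have "\<dots> = e / 2"
      using \<open>P > 0\<close> by simp
    finally show "dist (real (card {v \<in> box n V. S v mod m = j}) / P) (1 / real_of_int m) < e"
      using e by simp
  qed
qed

theorem proposition6p4:
  fixes n :: nat and \<theta> :: "nat \<Rightarrow> real" and m :: int
  assumes "n \<ge> 1"
    and "\<theta> 1 \<notin> \<rat>"
    and "m \<ge> 2"
  shows "unif_distr_mod n (\<lambda>v. \<lfloor>(\<Sum>i=1..n. real (v i) * \<theta> i) + \<theta> 0\<rfloor>) m"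
proof (rule unif_distr_mod_if_uniform_along_first_coordinate[OF assms(1)])
  fix j and \<epsilon> :: real
  assume "j \<in> {0..<m}" "\<epsilon> > 0"
  then obtain N0 where N0: "\<And>N d. N \<ge> N0 \<Longrightarrow>
      \<bar>real (card {a\<in>{1..N}. \<lfloor>real a * \<theta> 1 + d\<rfloor> mod m = j}) - real N / of_int m\<bar> \<le> \<epsilon> * real N"
    using card_floor_mod_uniform[OF assms(2), of j m \<epsilon>] by auto
  have split: "(\<Sum>i=1..n. real ((u(1:=a)) i) * \<theta> i) + \<theta> 0
                 = real a * \<theta> 1 + ((\<Sum>i\<in>{1..n}-{1}. real (u i) * \<theta> i) + \<theta> 0)" for u a
    using assms(1) by (subst sum.remove[of _ 1]) (auto intro!: sum.cong)
  show "\<exists>N0. \<forall>N\<ge>N0. \<forall>u. \<bar>real (card {a\<in>{1..N}.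
      \<lfloor>(\<Sum>i=1..n. real ((u(1:=a)) i) * \<theta> i) + \<theta> 0\<rfloor> mod m = j}) - real N / of_int m\<bar> \<le> \<epsilon> * real N"
    unfolding split using N0 by blast
qed

end
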